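(* Let $r\ge1$ be an integer and let $G$ be an $(r+1)$-path degenerate graph. If $G$ is a forest, then $\mathrm{arb}_r(G)=1$; otherwise $\mathrm{arb}_r(G)=r+1$.
   Context: Graphs are finite and simple. For an integer $r\ge1$, the generalized $r$-arboricity $\mathrm{arb}_r(G)$ is the minimum number of colors in a (not necessarily proper) coloring of the edges of $G$ such that every cycle $C$ of $G$ receives at least $\min\{|C|,r+1\}$ distinct colors ($|C|$ being the length of $C$). A strict ear of a graph $G$ is a path of $G$ whose internal vertices all have degree $2$ in $G$ and whose two endpoints are distinct. For an integer $p\ge1$, a $p$-reduction of $G$ is the deletion of either an isolated vertex, or a vertex of degree $1$, or the internal vertices of a strict ear of $G$ of length at least $p$. A graph is $p$-path degenerate if it can be reduced to the empty graph by a sequence of $p$-reductions. *)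

theory Defs
  imports Main
begin

definition simple_graph :: "'a set \<Rightarrow> 'a set set \<Rightarrow> bool" where
  "simple_graph V E \<longleftrightarrow> finite V \<and>
     (\<forall>e\<in>E. \<exists>u v. u \<noteq> v \<and> u \<in> V \<and> v \<in> V \<and> e = {u, v})"

definition degree :: "'a set set \<Rightarrow> 'a \<Rightarrow> nat" where
  "degree E v = card {e \<in> E. v \<in> e}"

definition is_cycle :: "'a set \<Rightarrow> 'a set set \<Rightarrow> 'a list \<Rightarrow> bool" where
  "is_cycle V E vs \<longleftrightarrow> length vs \<ge> 3 \<and> distinct vs \<and> set vs \<subseteq> V \<and>
     (\<forall>i < length vs. {vs ! i, vs ! ((i + 1) mod length vs)} \<in> E)"

definition cycle_edges :: "'a list \<Rightarrow> 'a set set" where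
  "cycle_edges vs = {{vs ! i, vs ! ((i + 1) mod length vs)} | i. i < length vs}"

definition forest :: "'a set \<Rightarrow> 'a set set \<Rightarrow> bool" where
  "forest V E \<longleftrightarrow> \<not> (\<exists>vs. is_cycle V E vs)"

definition good_coloring :: "nat \<Rightarrow> 'a set \<Rightarrow> 'a set set \<Rightarrow> nat \<Rightarrow> ('a set \<Rightarrow> nat) \<Rightarrow> bool" where
  "good_coloring r V E k c \<longleftrightarrow> (\<forall>e\<in>E. c e < k) \<and>
     (\<forall>vs. is_cycle V E vs \<longrightarrow> card (c ` cycle_edges vs) \<ge> min (length vs) (r + 1))"

text \<open>Generalized r-arboricity: minimum number of colours (at least one colour is used,
  so that an edgeless graph has value 1, as in the paper's forest case).\<close>
definition arb :: "nat \<Rightarrow> 'a set \<Rightarrow> 'a set set \<Rightarrow> nat" where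
  "arb r V E = (LEAST k. k \<ge> 1 \<and> (\<exists>c. good_coloring r V E k c))"

definition strict_ear :: "'a set \<Rightarrow> 'a set set \<Rightarrow> 'a list \<Rightarrow> bool" where
  "strict_ear V E xs \<longleftrightarrow> length xs \<ge> 2 \<and> distinct xs \<and> set xs \<subseteq> V \<and>
     (\<forall>i. i + 1 < length xs \<longrightarrow> {xs ! i, xs ! (i + 1)} \<in> E) \<and>
     (\<forall>i. 0 < i \<and> i + 1 < length xs \<longrightarrow> degree E (xs ! i) = 2)"

definition delete_vertices :: "'a set \<Rightarrow> 'a set \<Rightarrow> 'a set set \<Rightarrow> 'a set \<times> 'a set set" where
  "delete_vertices S V E = (V - S, {e \<in> E. e \<inter> S = {}})"

definition p_reduction :: "nat \<Rightarrow> 'a set \<Rightarrow> 'a set set \<Rightarrow> 'a set \<Rightarrow> 'a set set \<Rightarrow> bool" where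
  "p_reduction p V E V' E' \<longleftrightarrow>
     (\<exists>v\<in>V. (degree E v = 0 \<or> degree E v = 1) \<and> (V', E') = delete_vertices {v} V E) \<or>
     (\<exists>xs. strict_ear V E xs \<and> length xs - 1 \<ge> p \<and>
        (V', E') = delete_vertices (set (butlast (tl xs))) V E)"

inductive path_degenerate :: "nat \<Rightarrow> 'a set \<Rightarrow> 'a set set \<Rightarrow> bool" for p where
  empty: "path_degenerate p {} {}"
| step: "p_reduction p V E V' E' \<Longrightarrow> path_degenerate p V' E' \<Longrightarrow> path_degenerate p V E"

end

theory Submission
  imports Defs
begin

text \<open>Cycles avoid vertices of degree at most one, and a cycle that meets the interior of a
  strict ear contains the whole ear, because interior vertices have degree two. Undoing the
  reductions one at a time therefore proves two facts by induction. First, every cycle either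
  survives the reduction or contains an ear with at least \<open>r + 1\<close> edges, so a graph with a cycle
  has a cycle of length at least \<open>r + 1\<close>, which needs \<open>r + 1\<close> colours. Second, \<open>r + 1\<close> colours
  suffice: give the first \<open>r + 1\<close> edges of each deleted ear distinct colours.\<close>

lemma simple_graph_finite_edges:
  assumes "simple_graph V E"
  shows "finite E"
proof -
  have "E \<subseteq> Pow V" using assms unfolding simple_graph_def by auto
  with assms show ?thesis unfolding simple_graph_def by (meson finite_Pow_iff finite_subset)
qed

lemma cycle_edges_subset: "is_cycle V E vs \<Longrightarrow> cycle_edges vs \<subseteq> E"
  unfolding is_cycle_def cycle_edges_def by auto

lemma cycle_edges_eq_image:
  "cycle_edges vs = (\<lambda>i. {vs ! i, vs ! ((i + 1) mod length vs)}) ` {..<length vs}"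
  unfolding cycle_edges_def by auto

lemma finite_cycle_edges: "finite (cycle_edges vs)"
  unfolding cycle_edges_eq_image by simp

lemma card_cycle_edges_le: "card (cycle_edges vs) \<le> length vs"
  unfolding cycle_edges_eq_image by (metis card_image_le card_lessThan finite_lessThan)

lemma cycle_edge_subset_set: "e \<in> cycle_edges vs \<Longrightarrow> e \<subseteq> set vs"
  unfolding cycle_edges_def by (auto intro!: nth_mem mod_less_divisor)

lemma is_cycle_mono: "is_cycle V' E' vs \<Longrightarrow> V' \<subseteq> V \<Longrightarrow> E' \<subseteq> E \<Longrightarrow> is_cycle V E vs"
  unfolding is_cycle_def by auto

lemma is_cycle_delete_vertices:
  assumes "is_cycle V E vs" "set vs \<inter> S = {}"
  shows "is_cycle (V - S) {e \<in> E. e \<inter> S = {}} vs"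
proof -
  have "cycle_edges vs \<subseteq> {e \<in> E. e \<inter> S = {}}"
    using assms cycle_edges_subset cycle_edge_subset_set by fastforce
  with assms show ?thesis unfolding is_cycle_def cycle_edges_def by auto
qed

lemma cycle_vertex_two_edges:
  assumes "is_cycle V E vs" "v \<in> set vs"
  obtains e1 e2 where "e1 \<in> cycle_edges vs" "e2 \<in> cycle_edges vs" "e1 \<noteq> e2" "v \<in> e1" "v \<in> e2"
proof -
  let ?n = "length vs"
  have n3: "?n \<ge> 3" and dist: "distinct vs" using assms(1) unfolding is_cycle_def by auto
  obtain i where i: "i < ?n" "vs ! i = v" using assms(2) by (metis in_set_conv_nth)
  define succ where "succ = (if i + 1 = ?n then 0 else i + 1)"
  define pred where "pred = (if i = 0 then ?n - 1 else i - 1)"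
  have succ: "(i + 1) mod ?n = succ" "succ < ?n" "succ \<noteq> i"
    using i n3 unfolding succ_def by auto
  have pred: "(pred + 1) mod ?n = i" "pred < ?n" "pred \<noteq> i" "pred \<noteq> succ"
    using i n3 unfolding pred_def succ_def by auto
  define e1 where "e1 = {vs ! i, vs ! ((i + 1) mod ?n)}"
  define e2 where "e2 = {vs ! pred, vs ! ((pred + 1) mod ?n)}"
  have "e1 \<in> cycle_edges vs" "e2 \<in> cycle_edges vs"
    unfolding e1_def e2_def cycle_edges_def using i pred by auto
  moreover have "e1 \<noteq> e2"
  proof
    assume "e1 = e2"
    hence "vs ! succ \<in> {vs ! pred, vs ! i}" unfolding e1_def e2_def succ pred by auto
    thus False using dist i succ pred by (auto simp: nth_eq_iff_index_eq)
  qed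
  moreover have "v \<in> e1" "v \<in> e2" unfolding e1_def e2_def using i pred by auto
  ultimately show ?thesis using that by blast
qed

lemma two_le_degree:
  assumes "finite E" "e1 \<in> E" "e2 \<in> E" "e1 \<noteq> e2" "v \<in> e1" "v \<in> e2"
  shows "2 \<le> degree E v"
proof -
  have "{e1, e2} \<subseteq> {e \<in> E. v \<in> e}" using assms by auto
  hence "card {e1, e2} \<le> card {e \<in> E. v \<in> e}" using assms(1) by (intro card_mono) auto
  thus ?thesis using assms(4) unfolding degree_def by simp
qed

lemma not_in_cycle_if_degree_le_1:
  assumes "finite E" "is_cycle V E vs" "degree E v \<le> 1"
  shows "v \<notin> set vs"
proof
  assume "v \<in> set vs"
  then obtain e1 e2 where "e1 \<in> cycle_edges vs" "e2 \<in> cycle_edges vs" "e1 \<noteq> e2" "v \<in> e1" "v \<in> e2"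
    by (rule cycle_vertex_two_edges[OF assms(2)])
  hence "2 \<le> degree E v" using two_le_degree[OF assms(1)] cycle_edges_subset[OF assms(2)] by blast
  with assms(3) show False by simp
qed

lemma degree_two_incident_edge:
  assumes "finite E" "degree E v = 2" "e1 \<in> E" "e2 \<in> E" "e1 \<noteq> e2" "v \<in> e1" "v \<in> e2"
    "f \<in> E" "v \<in> f"
  shows "f = e1 \<or> f = e2"
proof -
  have "{e1, e2} \<subseteq> {e \<in> E. v \<in> e}" using assms by auto
  moreover have "card {e1, e2} = card {e \<in> E. v \<in> e}" using assms(2,5) unfolding degree_def by simp
  ultimately have "{e1, e2} = {e \<in> E. v \<in> e}" using assms(1) by (intro card_subset_eq) auto
  thus ?thesis using assms by auto
qed

definition ear_edges :: "'a list \<Rightarrow> 'a set set" where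
  "ear_edges xs = {{xs ! i, xs ! (i + 1)} | i. i + 1 < length xs}"

lemma ear_edge_nth_mem: "i + 1 < length xs \<Longrightarrow> {xs ! i, xs ! (i + 1)} \<in> ear_edges xs"
  unfolding ear_edges_def by blast

lemma set_butlast_tl_conv_nth: "set (butlast (tl xs)) = {xs ! j | j. 0 < j \<and> j + 1 < length xs}"
proof -
  have "set (butlast (tl xs)) = {butlast (tl xs) ! k | k. k < length xs - 2}"
    by (auto simp: set_conv_nth)
  also have "\<dots> = {xs ! j | j. 0 < j \<and> j + 1 < length xs}"
  proof safe
    fix k assume "k < length xs - 2"
    thus "\<exists>j. butlast (tl xs) ! k = xs ! j \<and> 0 < j \<and> j + 1 < length xs"
      by (intro exI[of _ "k + 1"]) (auto simp: nth_butlast nth_tl)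
  next
    fix j assume "0 < j" "j + 1 < length xs"
    thus "\<exists>k. xs ! j = butlast (tl xs) ! k \<and> k < length xs - 2"
      by (intro exI[of _ "j - 1"]) (auto simp: nth_butlast nth_tl)
  qed
  finally show ?thesis .
qed

lemma three_le_length_if_interior: "set (butlast (tl xs)) \<noteq> {} \<Longrightarrow> 3 \<le> length xs"
proof -
  assume "set (butlast (tl xs)) \<noteq> {}"
  hence "length (butlast (tl xs)) \<noteq> 0" by (metis length_0_conv set_empty)
  thus ?thesis unfolding length_butlast length_tl by arith
qed

lemma ear_edge_index_unique:
  assumes "distinct xs" "i + 1 < length xs" "k + 1 < length xs"
    "{xs ! i, xs ! (i + 1)} = {xs ! k, xs ! (k + 1)}"
  shows "i = k"
proof -
  have "xs ! i = xs ! k \<or> (xs ! i = xs ! (k + 1) \<and> xs ! (i + 1) = xs ! k)"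
    using assms(4) by (auto simp: doubleton_eq_iff)
  thus ?thesis using assms(1-3) by (auto simp: nth_eq_iff_index_eq)
qed

lemma card_ear_edges:
  assumes "distinct xs"
  shows "card (ear_edges xs) = length xs - 1"
proof -
  have "ear_edges xs = (\<lambda>i. {xs ! i, xs ! (i + 1)}) ` {..<length xs - 1}"
    unfolding ear_edges_def by auto
  moreover have "inj_on (\<lambda>i. {xs ! i, xs ! (i + 1)}) {..<length xs - 1}"
    using ear_edge_index_unique[OF assms] by (auto simp: inj_on_def)
  ultimately show ?thesis by (simp add: card_image)
qed

lemma ear_edge_meets_interior:
  assumes "e \<in> ear_edges xs" "set (butlast (tl xs)) \<noteq> {}"
  shows "e \<inter> set (butlast (tl xs)) \<noteq> {}"
proof -
  obtain i where i: "i + 1 < length xs" "e = {xs ! i, xs ! (i + 1)}"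
    using assms(1) unfolding ear_edges_def by auto
  have "length xs \<ge> 3" using assms(2) by (rule three_le_length_if_interior)
  hence "xs ! (if i = 0 then 1 else i) \<in> set (butlast (tl xs))"
    unfolding set_butlast_tl_conv_nth using i by auto
  with i show ?thesis by (auto split: if_splits)
qed

lemma strict_ear_edges_at_cycle_vertex:
  assumes "finite E" "strict_ear V E xs" "is_cycle V E vs" "0 < j" "j + 1 < length xs"
    "xs ! j \<in> set vs"
  shows "{xs ! (j - 1), xs ! j} \<in> cycle_edges vs" "{xs ! j, xs ! (j + 1)} \<in> cycle_edges vs"
proof -
  have ear: "\<And>i. i + 1 < length xs \<Longrightarrow> {xs ! i, xs ! (i + 1)} \<in> E" "degree E (xs ! j) = 2"
    using assms(2,4,5) unfolding strict_ear_def by auto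
  have left: "{xs ! (j - 1), xs ! j} \<in> E" using ear(1)[of "j - 1"] assms(4,5) by auto
  have right: "{xs ! j, xs ! (j + 1)} \<in> E" using ear(1) assms(5) by auto
  obtain e1 e2 where e: "e1 \<in> cycle_edges vs" "e2 \<in> cycle_edges vs" "e1 \<noteq> e2"
    "xs ! j \<in> e1" "xs ! j \<in> e2" by (rule cycle_vertex_two_edges[OF assms(3,6)])
  have eE: "e1 \<in> E" "e2 \<in> E" using e cycle_edges_subset[OF assms(3)] by auto
  \<comment> \<open>The two cycle edges at an interior vertex are its only two edges, namely the ear edges.\<close>
  show "{xs ! (j - 1), xs ! j} \<in> cycle_edges vs" "{xs ! j, xs ! (j + 1)} \<in> cycle_edges vs"
    using degree_two_incident_edge[OF assms(1) ear(2) eE e(3-5) left]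
      degree_two_incident_edge[OF assms(1) ear(2) eE e(3-5) right] e(1,2) by auto
qed

lemma strict_ear_subset_cycle:
  assumes "finite E" "strict_ear V E xs" "is_cycle V E vs" "set vs \<inter> set (butlast (tl xs)) \<noteq> {}"
  shows "set xs \<subseteq> set vs"
proof -
  let ?P = "\<lambda>j. xs ! j \<in> set vs"
  obtain j0 where j0: "0 < j0" "j0 + 1 < length xs" "?P j0"
    using assms(4) unfolding set_butlast_tl_conv_nth by auto
  have spread: "?P (j - 1)" "?P (j + 1)" if "0 < j" "j + 1 < length xs" "?P j" for j
    using strict_ear_edges_at_cycle_vertex[OF assms(1-3) that] cycle_edge_subset_set by blast+
  have up: "?P j" if "j0 \<le> j" "j < length xs" for j
    using that(1) j0(3)
  proof (induction j rule: dec_induct)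
    case (step n)
    with spread(2)[of n] j0(1) that(2) show ?case by simp
  qed
  have down: "?P j" if "j \<le> j0" for j
    using that j0(3)
  proof (induction j rule: inc_induct)
    case (step n)
    with spread(1)[of "Suc n"] j0(2) show ?case by simp
  qed
  have "?P j" if "j < length xs" for j
    using up down that by (cases "j \<le> j0") auto
  thus ?thesis by (auto simp: in_set_conv_nth)
qed

lemma ear_edges_subset_cycle_edges:
  assumes "finite E" "strict_ear V E xs" "is_cycle V E vs" "set vs \<inter> set (butlast (tl xs)) \<noteq> {}"
  shows "ear_edges xs \<subseteq> cycle_edges vs"
proof
  fix e assume "e \<in> ear_edges xs"
  then obtain i where i: "i + 1 < length xs" "e = {xs ! i, xs ! (i + 1)}"
    unfolding ear_edges_def by auto
  have on_cycle: "xs ! j \<in> set vs" if "j < length xs" for j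
    using strict_ear_subset_cycle[OF assms] that by auto
  have "length xs \<ge> 3" using assms(4) by (intro three_le_length_if_interior) auto
  show "e \<in> cycle_edges vs"
  proof (cases "i = 0")
    case True
    with i strict_ear_edges_at_cycle_vertex(1)[OF assms(1-3), of 1] on_cycle \<open>length xs \<ge> 3\<close>
    show ?thesis by simp
  next
    case False
    with i strict_ear_edges_at_cycle_vertex(2)[OF assms(1-3), of i] on_cycle show ?thesis by simp
  qed
qed

lemma cycle_through_ear_length:
  assumes "finite E" "strict_ear V E xs" "is_cycle V E vs" "set vs \<inter> set (butlast (tl xs)) \<noteq> {}"
  shows "length xs - 1 \<le> length vs"
proof -
  have "card (ear_edges xs) \<le> card (cycle_edges vs)"
    using ear_edges_subset_cycle_edges[OF assms] by (intro card_mono finite_cycle_edges)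
  moreover have "distinct xs" using assms(2) unfolding strict_ear_def by simp
  ultimately show ?thesis using card_ear_edges card_cycle_edges_le[of vs] by fastforce
qed

definition ear_coloring :: "nat \<Rightarrow> 'a list \<Rightarrow> 'a set \<Rightarrow> nat" where
  "ear_coloring r xs e = min r (SOME i. i + 1 < length xs \<and> e = {xs ! i, xs ! (i + 1)})"

lemma ear_coloring_nth:
  assumes "distinct xs" "i + 1 < length xs"
  shows "ear_coloring r xs {xs ! i, xs ! (i + 1)} = min r i"
proof -
  have "(SOME k. k + 1 < length xs \<and> {xs ! i, xs ! (i + 1)} = {xs ! k, xs ! (k + 1)}) = i"
    using assms ear_edge_index_unique[OF assms(1)] by (intro some_equality) auto
  thus ?thesis unfolding ear_coloring_def by simp
qed

lemma ear_coloring_image: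
  assumes "distinct xs" "r + 1 < length xs"
  shows "ear_coloring r xs ` ear_edges xs = {..r}"
proof
  show "ear_coloring r xs ` ear_edges xs \<subseteq> {..r}" unfolding ear_coloring_def by auto
next
  show "{..r} \<subseteq> ear_coloring r xs ` ear_edges xs"
  proof
    fix i assume "i \<in> {..r}"
    hence i: "i + 1 < length xs" "min r i = i" using assms(2) by auto
    hence "ear_coloring r xs {xs ! i, xs ! (i + 1)} = i" using ear_coloring_nth[OF assms(1) i(1)] by simp
    with ear_edge_nth_mem[OF i(1)] show "i \<in> ear_coloring r xs ` ear_edges xs"
      by (metis rev_image_eqI)
  qed
qed

lemma good_coloring_extend:
  assumes good: "good_coloring r (V - S) {e \<in> E. e \<inter> S = {}} k c"
    and g: "\<And>e. e \<in> E \<Longrightarrow> e \<inter> S \<noteq> {} \<Longrightarrow> g e < k"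
    and meet: "\<And>vs. is_cycle V E vs \<Longrightarrow> set vs \<inter> S \<noteq> {} \<Longrightarrow>
        min (length vs) (r + 1) \<le> card ((\<lambda>e. if e \<inter> S = {} then c e else g e) ` cycle_edges vs)"
  shows "good_coloring r V E k (\<lambda>e. if e \<inter> S = {} then c e else g e)"
  unfolding good_coloring_def
proof (intro conjI allI impI ballI)
  fix e assume "e \<in> E"
  thus "(if e \<inter> S = {} then c e else g e) < k"
    using good g unfolding good_coloring_def by auto
next
  fix vs assume cyc: "is_cycle V E vs"
  show "min (length vs) (r + 1) \<le> card ((\<lambda>e. if e \<inter> S = {} then c e else g e) ` cycle_edges vs)"
  proof (cases "set vs \<inter> S = {}")
    case True
    with cyc have cyc': "is_cycle (V - S) {e \<in> E. e \<inter> S = {}} vs"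
      by (rule is_cycle_delete_vertices)
    have "(\<lambda>e. if e \<inter> S = {} then c e else g e) ` cycle_edges vs = c ` cycle_edges vs"
      using cycle_edges_subset[OF cyc'] by (intro image_cong) auto
    thus ?thesis using good cyc' unfolding good_coloring_def by auto
  next
    case False
    with meet cyc show ?thesis by simp
  qed
qed

lemma p_reductionE:
  assumes "p_reduction p V E V' E'"
  obtains (leaf) v where "degree E v \<le> 1" "V' = V - {v}" "E' = {e \<in> E. e \<inter> {v} = {}}"
  | (ear) xs where "strict_ear V E xs" "p \<le> length xs - 1"
      "V' = V - set (butlast (tl xs))" "E' = {e \<in> E. e \<inter> set (butlast (tl xs)) = {}}"
proof -
  from assms consider
      (leaf) v where "degree E v = 0 \<or> degree E v = 1" "(V', E') = delete_vertices {v} V E"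
    | (ear) xs where "strict_ear V E xs" "p \<le> length xs - 1"
        "(V', E') = delete_vertices (set (butlast (tl xs))) V E"
    unfolding p_reduction_def by blast
  then show thesis
  proof cases
    case leaf
    with that(1)[of v] show thesis unfolding delete_vertices_def by auto
  next
    case ear
    with that(2) show thesis unfolding delete_vertices_def by simp
  qed
qed

lemma path_degenerate_good_coloring:
  assumes "path_degenerate p V E" "finite E" "r + 1 \<le> p"
  shows "\<exists>c. good_coloring r V E (r + 1) c"
  using assms
proof (induction V E rule: path_degenerate.induct)
  case empty
  show ?case unfolding good_coloring_def is_cycle_def by auto
next
  case (step V E V' E')
  have "E' \<subseteq> E" using step.hyps(1) by (cases rule: p_reductionE) auto
  hence "finite E'" using step.prems(1) by (rule finite_subset)
  then obtain c where c: "good_coloring r V' E' (r + 1) c" using step.IH step.prems(2) by blast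
  from step.hyps(1) show ?case
  proof (cases rule: p_reductionE)
    case (leaf v)
    have "v \<notin> set vs" if "is_cycle V E vs" for vs
      using not_in_cycle_if_degree_le_1[OF step.prems(1) that leaf(1)] .
    hence "good_coloring r V E (r + 1) (\<lambda>e. if e \<inter> {v} = {} then c e else 0)"
      using c unfolding leaf(2,3) by (intro good_coloring_extend[where g = "\<lambda>_. 0"]) auto
    thus ?thesis by blast
  next
    case (ear xs)
    define S where "S = set (butlast (tl xs))"
    have dist: "distinct xs" using ear(1) unfolding strict_ear_def by simp
    have long: "r + 1 < length xs" using ear(2) step.prems(2) by linarith
    let ?c = "\<lambda>e. if e \<inter> S = {} then c e else ear_coloring r xs e"
    \<comment> \<open>A cycle through the interior contains the whole ear, whose first \<open>r + 1\<close> edges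
      get distinct colours.\<close>
    have "min (length vs) (r + 1) \<le> card (?c ` cycle_edges vs)"
      if cyc: "is_cycle V E vs" "set vs \<inter> S \<noteq> {}" for vs
    proof -
      have "S \<noteq> {}" using cyc(2) by auto
      hence meets: "e \<inter> S \<noteq> {}" if "e \<in> ear_edges xs" for e
        unfolding S_def by (rule ear_edge_meets_interior[OF that])
      have "{..r} = ear_coloring r xs ` ear_edges xs" using ear_coloring_image[OF dist long] ..
      also have "\<dots> = ?c ` ear_edges xs" using meets by (intro image_cong) auto
      also have "\<dots> \<subseteq> ?c ` cycle_edges vs"
        using ear_edges_subset_cycle_edges[OF step.prems(1) ear(1) cyc(1) cyc(2)[unfolded S_def]]
        by (rule image_mono)
      finally have "{..r} \<subseteq> ?c ` cycle_edges vs" .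
      hence "card {..r} \<le> card (?c ` cycle_edges vs)"
        by (intro card_mono finite_imageI finite_cycle_edges)
      thus ?thesis by simp
    qed
    moreover have "ear_coloring r xs e < r + 1" for e unfolding ear_coloring_def by simp
    ultimately have "good_coloring r V E (r + 1) ?c"
      using c unfolding ear(3,4) S_def by (intro good_coloring_extend[where g = "ear_coloring r xs"])
    thus ?thesis by blast
  qed
qed

lemma path_degenerate_long_cycle:
  assumes "path_degenerate p V E" "finite E" "is_cycle V E vs"
  shows "\<exists>ws. is_cycle V E ws \<and> p \<le> length ws"
  using assms
proof (induction V E arbitrary: vs rule: path_degenerate.induct)
  case empty
  thus ?case unfolding is_cycle_def by auto
next
  case (step V E V' E')
  from step.hyps(1) obtain S where S: "V' = V - S" "E' = {e \<in> E. e \<inter> S = {}}"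
    and through_S: "set vs \<inter> S \<noteq> {} \<Longrightarrow> p \<le> length vs"
  proof (cases rule: p_reductionE)
    case (leaf v)
    with not_in_cycle_if_degree_le_1[OF step.prems] show ?thesis by (intro that[of "{v}"]) auto
  next
    case (ear xs)
    with cycle_through_ear_length[OF step.prems(1) ear(1) step.prems(2)] show ?thesis
      by (intro that[of "set (butlast (tl xs))"]) auto
  qed
  show ?case
  proof (cases "set vs \<inter> S = {}")
    case True
    have "finite E'" using step.prems(1) S(2) by simp
    moreover have "is_cycle V' E' vs" using is_cycle_delete_vertices[OF step.prems(2) True] S by simp
    ultimately obtain ws where "is_cycle V' E' ws" "p \<le> length ws" using step.IH by blast
    with S show ?thesis using is_cycle_mono[of V' E' ws V E] by auto
  next
    case False
    with through_S step.prems show ?thesis by blast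
  qed
qed

lemma arb_forest: "forest V E \<Longrightarrow> arb r V E = 1"
proof -
  assume "forest V E"
  hence "good_coloring r V E 1 (\<lambda>_. 0)" unfolding good_coloring_def forest_def by auto
  thus ?thesis unfolding arb_def by (intro Least_equality) auto
qed

lemma good_coloring_ge_if_long_cycle:
  assumes "good_coloring r V E k c" "is_cycle V E ws" "r + 1 \<le> length ws"
  shows "r + 1 \<le> k"
proof -
  have "r + 1 \<le> card (c ` cycle_edges ws)" using assms unfolding good_coloring_def by auto
  moreover have "c ` cycle_edges ws \<subseteq> {..<k}"
    using assms(1) cycle_edges_subset[OF assms(2)] unfolding good_coloring_def by auto
  hence "card (c ` cycle_edges ws) \<le> k" by (metis card_lessThan card_mono finite_lessThan)
  ultimately show ?thesis by simp
qed

lemma arb_eq_if_long_cycle: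
  assumes "good_coloring r V E (r + 1) c" "is_cycle V E ws" "r + 1 \<le> length ws"
  shows "arb r V E = r + 1"
  unfolding arb_def
  using assms good_coloring_ge_if_long_cycle[OF _ assms(2,3)] by (intro Least_equality) auto

theorem mainTheorem10:
  fixes V :: "'a set" and E :: "'a set set" and r :: nat
  assumes "simple_graph V E" and "r \<ge> 1" and "path_degenerate (r + 1) V E"
  shows "(forest V E \<longrightarrow> arb r V E = 1) \<and> (\<not> forest V E \<longrightarrow> arb r V E = r + 1)"
proof (intro conjI impI)
  assume "forest V E"
  thus "arb r V E = 1" by (rule arb_forest)
next
  assume "\<not> forest V E"
  then obtain vs where "is_cycle V E vs" unfolding forest_def by auto
  moreover have "finite E" using assms(1) by (rule simple_graph_finite_edges)
  ultimately obtain ws where "is_cycle V E ws" "r + 1 \<le> length ws"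
    using path_degenerate_long_cycle[OF assms(3)] by blast
  moreover obtain c where "good_coloring r V E (r + 1) c"
    using path_degenerate_good_coloring[OF assms(3) \<open>finite E\<close>] by blast
  ultimately show "arb r V E = r + 1" by (intro arb_eq_if_long_cycle)
qed

end
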